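(* Let $P\subset\mathbb{R}^d$ with $|P|=n$, let $D=\operatorname{diam}P$, $r\in[n]$ and $\varepsilon>0$. Then there is a set $F\subset\mathbb{R}^d$ with $|F|\le r^r\varepsilon^{-r}$ such that for every $Y\subseteq P$ with $|Y|\ge\varepsilon n$, \[ \left(F+\frac{3.5D}{\sqrt r}B\right)\cap\operatorname{conv}Y\ne\emptyset. \]
   Context: $B$ denotes the closed Euclidean unit ball centred at the origin of $\mathbb{R}^d$, and $+$ is Minkowski sum, so $F+\rho B$ is the union of the closed balls of radius $\rho$ centred at points of $F$. *)

theory Defs
  imports "HOL-Analysis.Analysis"
begin

end

theory Submission
  imports Defs
begin

(* Average r points of a heavy set Y (one with |Y| >= eps n): by the variance identity for sums of
   r independent uniform samples, the mean of an r-tuple from Y^r lies on average within squared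
   distance D^2/r of the centroid of Y, so by Chebyshev at least half of the |Y|^r tuples have their
   mean (a point of conv Y) within 3.5 D / sqrt r of that centroid.  Take a maximal family of heavy
   sets whose sets of such "near" tuples are pairwise disjoint: all these tuples lie in P^r, so the
   family has at most 2 n^r / (eps n)^r members, and by maximality the near tuples of every heavy Y
   meet those of some member, which puts a point of conv Y within the radius of that member's
   centroid.  The centroids of the family form F; when the radius is at least D (in particular when
   r <= 12) a single point of P suffices. *)

definition centroid :: "'a::real_vector set \<Rightarrow> 'a" where
  "centroid Y = (1 / real (card Y)) *\<^sub>R (\<Sum>y\<in>Y. y)"

definition list_mean :: "'a::real_vector list \<Rightarrow> 'a" where
  "list_mean t = (1 / real (length t)) *\<^sub>R sum_list t"

lemma centroid_in_convex_hull:
  assumes "finite Y" and "Y \<noteq> {}"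
  shows "centroid Y \<in> convex hull Y"
proof -
  have "(\<Sum>y\<in>Y. (1 / real (card Y)) *\<^sub>R y) \<in> convex hull Y"
    using assms by (intro convex_sum) (auto simp: hull_inc card_gt_0_iff)
  then show ?thesis
    by (simp add: centroid_def scaleR_sum_right)
qed

lemma sum_diff_centroid:
  assumes "finite Y"
  shows "(\<Sum>y\<in>Y. y - centroid Y) = 0"
  using assms by (cases "Y = {}") (simp_all add: sum_subtractf sum_constant_scaleR centroid_def)

lemma norm_diff_centroid_le:
  assumes "finite Y" and "y \<in> Y" and "\<And>x z. x \<in> Y \<Longrightarrow> z \<in> Y \<Longrightarrow> dist x z \<le> D"
  shows "norm (y - centroid Y) \<le> D"
proof -
  have "convex hull Y \<subseteq> cball y D"
    using assms by (intro hull_minimal) auto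
  moreover have "centroid Y \<in> convex hull Y"
    using assms by (intro centroid_in_convex_hull) auto
  ultimately show ?thesis
    by (auto simp: dist_norm)
qed

lemma list_mean_in_convex_hull:
  assumes "set t \<subseteq> Y" and "t \<noteq> []"
  shows "list_mean t \<in> convex hull Y"
proof -
  have "(\<Sum>i<length t. (1 / real (length t)) *\<^sub>R t ! i) \<in> convex hull Y"
    using assms by (intro convex_sum) (auto simp: hull_inc subset_iff)
  then show ?thesis
    by (simp add: list_mean_def sum_list_sum_nth atLeast0LessThan scaleR_sum_right)
qed

lemma sum_list_diff_eq_scaled_list_mean:
  fixes c :: "'a::real_vector"
  assumes "t \<noteq> []"
  shows "(\<Sum>y\<leftarrow>t. y - c) = real (length t) *\<^sub>R (list_mean t - c)"
proof -
  have "(\<Sum>y\<leftarrow>t. y - c) = sum_list t - real (length t) *\<^sub>R c"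
    by (induction t) (auto simp: algebra_simps)
  then show ?thesis
    using assms by (simp add: list_mean_def algebra_simps)
qed

lemma sum_power2_norm_sum_list_lists:
  fixes f :: "'b \<Rightarrow> 'a::real_inner"
  assumes "finite Y" and "(\<Sum>y\<in>Y. f y) = 0"
  shows "real (card Y) * (\<Sum>t\<in>{xs. set xs \<subseteq> Y \<and> length xs = k}. (norm (\<Sum>y\<leftarrow>t. f y))\<^sup>2)
    = real k * real (card Y) ^ k * (\<Sum>y\<in>Y. (norm (f y))\<^sup>2)"
proof (induction k)
  case 0
  have "{xs. set xs \<subseteq> Y \<and> length xs = 0} = {[]}"
    by auto
  then show ?case
    by simp
next
  case (Suc k)
  let ?L = "{xs. set xs \<subseteq> Y \<and> length xs = k}"
  let ?s = "\<lambda>t. \<Sum>y\<leftarrow>t. f y"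
  have "(\<Sum>t\<in>{xs. set xs \<subseteq> Y \<and> length xs = Suc k}. (norm (?s t))\<^sup>2)
      = (\<Sum>t\<in>?L. \<Sum>y\<in>Y. (norm (f y + ?s t))\<^sup>2)"
    unfolding lists_length_Suc_eq
    by (subst sum.reindex) (auto simp: inj_on_def sum.cartesian_product split_def)
  also have "\<dots> = (\<Sum>t\<in>?L. \<Sum>y\<in>Y. (norm (f y))\<^sup>2 + 2 * inner (f y) (?s t) + (norm (?s t))\<^sup>2)"
    by (simp add: power2_norm_eq_inner inner_commute algebra_simps)
  also have "\<dots> = (\<Sum>t\<in>?L. (\<Sum>y\<in>Y. (norm (f y))\<^sup>2)
      + 2 * inner (\<Sum>y\<in>Y. f y) (?s t) + real (card Y) * (norm (?s t))\<^sup>2)"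
    by (simp add: sum.distrib sum_distrib_left inner_sum_left)
  also have "\<dots> = real (card Y) ^ k * (\<Sum>y\<in>Y. (norm (f y))\<^sup>2)
      + real (card Y) * (\<Sum>t\<in>?L. (norm (?s t))\<^sup>2)"
    \<comment> \<open>the cross terms vanish because \<open>f\<close> sums to \<open>0\<close> over \<open>Y\<close>\<close>
    using assms by (simp add: sum.distrib sum_distrib_left card_lists_length_eq)
  finally show ?case
    using Suc.IH by (simp add: algebra_simps)
qed

lemma card_far_list_means_le:
  fixes Y :: "'a::real_inner set"
  assumes "finite Y" and "Y \<noteq> {}" and "1 \<le> r" and "0 < \<rho>"
    and bound: "\<And>y. y \<in> Y \<Longrightarrow> norm (y - centroid Y) \<le> D"
  shows "real (card {t \<in> {xs. set xs \<subseteq> Y \<and> length xs = r}. \<rho> < norm (list_mean t - centroid Y)})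
      * (real r * \<rho>\<^sup>2) \<le> real (card Y) ^ r * D\<^sup>2"
proof -
  let ?L = "{xs. set xs \<subseteq> Y \<and> length xs = r}"
  let ?c = "centroid Y"
  let ?s = "\<lambda>t. \<Sum>y\<leftarrow>t. y - ?c"
  define far where "far = {t \<in> ?L. \<rho> < norm (list_mean t - ?c)}"
  define m where "m = real (card Y)"
  have "0 < m"
    using assms by (simp add: m_def card_gt_0_iff)
  have norm_s: "norm (?s t) = real r * norm (list_mean t - ?c)" if "t \<in> ?L" for t
    using that \<open>1 \<le> r\<close> by (subst sum_list_diff_eq_scaled_list_mean) auto
  have "real (card far) * (real r * \<rho>)\<^sup>2 = (\<Sum>t\<in>far. (real r * \<rho>)\<^sup>2)"
    by simp
  also have "\<dots> \<le> (\<Sum>t\<in>far. (norm (?s t))\<^sup>2)"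
  proof (rule sum_mono)
    fix t
    assume "t \<in> far"
    then have "real r * \<rho> \<le> norm (?s t)"
      by (auto simp: far_def norm_s intro!: mult_left_mono)
    then show "(real r * \<rho>)\<^sup>2 \<le> (norm (?s t))\<^sup>2"
      using \<open>0 < \<rho>\<close> by (simp add: power_mono)
  qed
  also have "\<dots> \<le> (\<Sum>t\<in>?L. (norm (?s t))\<^sup>2)"
    using assms(1) by (intro sum_mono2) (auto simp: far_def finite_lists_length_eq)
  finally have far_le: "real (card far) * (real r * \<rho>)\<^sup>2 \<le> (\<Sum>t\<in>?L. (norm (?s t))\<^sup>2)" .
  have variance_le: "(\<Sum>y\<in>Y. (norm (y - ?c))\<^sup>2) \<le> m * D\<^sup>2"
    using sum_mono[of Y "\<lambda>y. (norm (y - ?c))\<^sup>2" "\<lambda>_. D\<^sup>2"] bound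
    by (simp add: m_def power_mono)
  have "(m * real r) * (real (card far) * (real r * \<rho>\<^sup>2))
      = m * (real (card far) * (real r * \<rho>)\<^sup>2)"
    by (simp add: power2_eq_square)
  also have "\<dots> \<le> m * (\<Sum>t\<in>?L. (norm (?s t))\<^sup>2)"
    using far_le \<open>0 < m\<close> by simp
  also have "\<dots> = real r * m ^ r * (\<Sum>y\<in>Y. (norm (y - ?c))\<^sup>2)"
    using sum_power2_norm_sum_list_lists[OF assms(1) sum_diff_centroid[OF assms(1)]]
    by (simp add: m_def)
  also have "\<dots> \<le> real r * m ^ r * (m * D\<^sup>2)"
    using variance_le \<open>0 < m\<close> by (intro mult_left_mono) auto
  also have "\<dots> = (m * real r) * (m ^ r * D\<^sup>2)"
    by simp
  finally show ?thesis
    using \<open>0 < m\<close> \<open>1 \<le> r\<close> by (simp add: far_def m_def)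
qed

lemma card_near_list_means_ge:
  fixes Y :: "'a::real_inner set"
  assumes "finite Y" and "Y \<noteq> {}" and "1 \<le> r" and "0 < \<rho>"
    and "\<And>y. y \<in> Y \<Longrightarrow> norm (y - centroid Y) \<le> D"
    and "2 * D\<^sup>2 \<le> real r * \<rho>\<^sup>2"
  shows "real (card Y) ^ r
    \<le> 2 * real (card {t \<in> {xs. set xs \<subseteq> Y \<and> length xs = r}. norm (list_mean t - centroid Y) \<le> \<rho>})"
proof -
  let ?L = "{xs. set xs \<subseteq> Y \<and> length xs = r}"
  define near where "near = {t \<in> ?L. norm (list_mean t - centroid Y) \<le> \<rho>}"
  define far where "far = {t \<in> ?L. \<rho> < norm (list_mean t - centroid Y)}"
  have "?L = near \<union> far" and "near \<inter> far = {}"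
    by (auto simp: near_def far_def)
  moreover have "finite near" and "finite far"
    by (rule finite_subset[OF _ finite_lists_length_eq[OF assms(1)]], force simp: near_def far_def)+
  ultimately have card_split: "card near + card far = card Y ^ r"
    using card_lists_length_eq[OF assms(1), of r] by (simp flip: card_Un_disjoint)
  have "real (card far) * (real r * \<rho>\<^sup>2) \<le> real (card Y) ^ r * D\<^sup>2"
    unfolding far_def by (rule card_far_list_means_le[OF assms(1-5)])
  also have "\<dots> \<le> real (card Y) ^ r * (real r * \<rho>\<^sup>2 / 2)"
    using assms(6) by (intro mult_left_mono) auto
  also have "\<dots> = (real (card Y) ^ r / 2) * (real r * \<rho>\<^sup>2)"
    by simp
  finally have "real (card far) \<le> real (card Y) ^ r / 2"
    using assms(3,4) by (simp add: mult_le_cancel_right)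
  then show ?thesis
    using arg_cong[OF card_split, of real] unfolding near_def by simp
qed

lemma maximal_disjoint_subfamily:
  assumes "finite H"
  obtains M where "M \<subseteq> H" and "disjoint_family_on G M"
    and "\<And>i. i \<in> H \<Longrightarrow> G i \<noteq> {} \<Longrightarrow> \<exists>j\<in>M. G i \<inter> G j \<noteq> {}"
proof -
  define Fam where "Fam = {M. M \<subseteq> H \<and> disjoint_family_on G M}"
  have "finite Fam"
    using assms by (simp add: Fam_def)
  moreover have "{} \<in> Fam"
    by (simp add: Fam_def disjoint_family_on_def)
  ultimately obtain M where "M \<in> Fam" and maximal: "\<And>M'. M' \<in> Fam \<Longrightarrow> M \<subseteq> M' \<Longrightarrow> M = M'"
    using finite_has_maximal[of Fam] by blast
  show thesis
  proof (rule that)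
    show "M \<subseteq> H" and "disjoint_family_on G M"
      using \<open>M \<in> Fam\<close> by (auto simp: Fam_def)
    fix i
    assume "i \<in> H" and "G i \<noteq> {}"
    show "\<exists>j\<in>M. G i \<inter> G j \<noteq> {}"
    proof (rule ccontr)
      assume "\<not> (\<exists>j\<in>M. G i \<inter> G j \<noteq> {})"
      then have "insert i M \<in> Fam"
        using \<open>M \<in> Fam\<close> \<open>i \<in> H\<close> by (auto simp: Fam_def disjoint_family_on_def)
      then have "i \<in> M"
        using maximal by blast
      then show False
        using \<open>\<not> (\<exists>j\<in>M. G i \<inter> G j \<noteq> {})\<close> \<open>G i \<noteq> {}\<close> by blast
    qed
  qed
qed

lemma centroid_net:
  fixes P :: "'a::real_inner set"
  assumes "finite P" and diam: "\<And>x y. x \<in> P \<Longrightarrow> y \<in> P \<Longrightarrow> dist x y \<le> D"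
    and "1 \<le> r" and "0 < \<rho>" and "2 * D\<^sup>2 \<le> real r * \<rho>\<^sup>2" and "0 < a"
  obtains F where "finite F" and "real (card F) * a ^ r \<le> 2 * real (card P) ^ r"
    and "\<And>Y. Y \<subseteq> P \<Longrightarrow> a \<le> real (card Y) \<Longrightarrow> (\<Union>f\<in>F. cball f \<rho>) \<inter> convex hull Y \<noteq> {}"
proof -
  define heavy where "heavy = {Y. Y \<subseteq> P \<and> a \<le> real (card Y)}"
  define tuples where "tuples Y = {xs. set xs \<subseteq> Y \<and> length xs = r}" for Y :: "'a set"
  define near where "near Y = {t \<in> tuples Y. norm (list_mean t - centroid Y) \<le> \<rho>}" for Y
  have near_large: "a ^ r \<le> 2 * real (card (near Y))" if "Y \<in> heavy" for Y
  proof -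
    have "Y \<subseteq> P" and "a \<le> real (card Y)"
      using that by (auto simp: heavy_def)
    then have "finite Y" and "Y \<noteq> {}"
      using \<open>finite P\<close> \<open>0 < a\<close> finite_subset by fastforce+
    have "a ^ r \<le> real (card Y) ^ r"
      using \<open>a \<le> real (card Y)\<close> \<open>0 < a\<close> by (simp add: power_mono)
    also have "\<dots> \<le> 2 * real (card (near Y))"
      unfolding near_def tuples_def
      using \<open>finite Y\<close> \<open>Y \<noteq> {}\<close> \<open>Y \<subseteq> P\<close> assms(3-5) diam
      by (intro card_near_list_means_ge norm_diff_centroid_le) auto
    finally show ?thesis .
  qed
  have "finite (tuples P)"
    using \<open>finite P\<close> by (simp add: tuples_def finite_lists_length_eq)
  have near_tuples: "near Y \<subseteq> tuples P" if "Y \<in> heavy" for Y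
    using that by (auto simp: near_def tuples_def heavy_def)
  then have near_finite: "finite (near Y)" if "Y \<in> heavy" for Y
    using that \<open>finite (tuples P)\<close> finite_subset by blast
  have "finite heavy"
    using \<open>finite P\<close> by (auto simp: heavy_def intro: finite_subset[of _ "Pow P"])
  then obtain M where "M \<subseteq> heavy" and "disjoint_family_on near M"
    and meets: "\<And>Y. Y \<in> heavy \<Longrightarrow> near Y \<noteq> {} \<Longrightarrow> \<exists>Y'\<in>M. near Y \<inter> near Y' \<noteq> {}"
    using maximal_disjoint_subfamily[of heavy near] by blast
  have "finite M"
    using \<open>finite heavy\<close> \<open>M \<subseteq> heavy\<close> finite_subset by blast
  have "real (card M) * a ^ r = (\<Sum>Y\<in>M. a ^ r)"
    by simp
  also have "\<dots> \<le> (\<Sum>Y\<in>M. 2 * real (card (near Y)))"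
    using near_large \<open>M \<subseteq> heavy\<close> by (intro sum_mono) auto
  also have "\<dots> = 2 * real (card (\<Union>Y\<in>M. near Y))"
    using \<open>finite M\<close> \<open>M \<subseteq> heavy\<close> \<open>disjoint_family_on near M\<close> near_finite
    by (subst card_UN_disjoint) (auto simp: disjoint_family_on_def sum_distrib_left)
  also have "\<dots> \<le> 2 * real (card (tuples P))"
    using \<open>finite (tuples P)\<close> \<open>M \<subseteq> heavy\<close> near_tuples by (auto intro!: card_mono)
  also have "\<dots> = 2 * real (card P) ^ r"
    using \<open>finite P\<close> by (simp add: tuples_def card_lists_length_eq)
  finally have card_M: "real (card M) * a ^ r \<le> 2 * real (card P) ^ r" .
  show thesis
  proof (rule that[of "centroid ` M"])
    show "finite (centroid ` M)"
      using \<open>finite M\<close> by simp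
    show "real (card (centroid ` M)) * a ^ r \<le> 2 * real (card P) ^ r"
      using card_M card_image_le[OF \<open>finite M\<close>, of centroid] \<open>0 < a\<close>
      by (meson order_trans mult_right_mono of_nat_le_iff zero_le_power less_imp_le)
    fix Y
    assume "Y \<subseteq> P" and "a \<le> real (card Y)"
    then have "Y \<in> heavy"
      by (simp add: heavy_def)
    moreover have "near Y \<noteq> {}"
      using near_large[OF \<open>Y \<in> heavy\<close>] zero_less_power[OF \<open>0 < a\<close>, of r] by (intro notI) simp
    ultimately obtain Y' t where "Y' \<in> M" and "t \<in> near Y" and "t \<in> near Y'"
      using meets by blast
    then have "list_mean t \<in> convex hull Y"
      using \<open>1 \<le> r\<close> by (intro list_mean_in_convex_hull) (auto simp: near_def tuples_def)
    moreover have "list_mean t \<in> cball (centroid Y') \<rho>"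
      using \<open>t \<in> near Y'\<close> by (simp add: near_def dist_norm norm_minus_commute)
    ultimately show "(\<Union>f\<in>centroid ` M. cball f \<rho>) \<inter> convex hull Y \<noteq> {}"
      using \<open>Y' \<in> M\<close> by blast
  qed
qed

lemma heavy_hull_net:
  fixes P :: "'a::real_inner set"
  assumes "finite P" and "P \<noteq> {}" and diam: "\<And>x y. x \<in> P \<Longrightarrow> y \<in> P \<Longrightarrow> dist x y \<le> D"
    and "1 \<le> r" and "0 < \<epsilon>"
  obtains F where "finite F" and "real (card F) \<le> real r ^ r / \<epsilon> ^ r"
    and "\<And>Y. Y \<subseteq> P \<Longrightarrow> \<epsilon> * real (card P) \<le> real (card Y) \<Longrightarrow>
      (\<Union>f\<in>F. cball f (3.5 * D / sqrt (real r))) \<inter> convex hull Y \<noteq> {}"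
proof -
  define \<rho> where "\<rho> = 3.5 * D / sqrt (real r)"
  obtain p where "p \<in> P"
    using assms(2) by blast
  have "0 \<le> D"
    using diam[OF \<open>p \<in> P\<close> \<open>p \<in> P\<close>] by simp
  have "0 < real (card P)"
    using assms(1,2) by (simp add: card_gt_0_iff)
  then have "0 < \<epsilon> * real (card P)"
    using \<open>0 < \<epsilon>\<close> by simp
  have "real r \<le> real r ^ r"
    using \<open>1 \<le> r\<close> power_increasing[of 1 r "real r"] by simp
  \<comment> \<open>\<open>centroid_net\<close> yields \<open>2 / \<epsilon> ^ r\<close> centres, which is within the bound only for \<open>r \<ge> 2\<close>;
    \<open>\<rho> < D\<close> forces \<open>r \<ge> 13\<close>, and otherwise one centre suffices\<close>
  consider "1 < \<epsilon>" | "\<epsilon> \<le> 1" and "D \<le> \<rho>" | "\<rho> < D"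
    by linarith
  then show thesis
  proof cases
    case 1
    have "\<not> \<epsilon> * real (card P) \<le> real (card Y)" if "Y \<subseteq> P" for Y
    proof -
      have "real (card Y) \<le> real (card P)"
        using card_mono[OF \<open>finite P\<close> that] by simp
      also have "\<dots> < \<epsilon> * real (card P)"
        using mult_strict_right_mono[OF 1 \<open>0 < real (card P)\<close>] by simp
      finally show ?thesis
        by simp
    qed
    then show thesis
      using that[of "{}"] \<open>0 < \<epsilon>\<close> by simp
  next
    case 2
    have "\<epsilon> ^ r \<le> 1"
      using 2 \<open>0 < \<epsilon>\<close> by (simp add: power_le_one)
    then have "real (card {p}) \<le> real r ^ r / \<epsilon> ^ r"
      using 2 \<open>1 \<le> r\<close> \<open>real r \<le> real r ^ r\<close> \<open>0 < \<epsilon>\<close> by (simp add: le_divide_eq)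
    moreover have "(\<Union>f\<in>{p}. cball f \<rho>) \<inter> convex hull Y \<noteq> {}"
      if "Y \<subseteq> P" and heavy: "\<epsilon> * real (card P) \<le> real (card Y)" for Y
    proof -
      have "Y \<noteq> {}"
        using heavy \<open>0 < \<epsilon> * real (card P)\<close> by auto
      then obtain y where "y \<in> Y"
        by blast
      then have "y \<in> cball p \<rho>"
        using diam[OF \<open>p \<in> P\<close>, of y] \<open>Y \<subseteq> P\<close> 2 by auto
      then show ?thesis
        using \<open>y \<in> Y\<close> hull_inc[of y Y] by blast
    qed
    ultimately show thesis
      using that[of "{p}"] by (simp add: \<rho>_def)
  next
    case 3
    have "0 < D"
      using 3 \<open>0 \<le> D\<close> by (cases "D = 0") (auto simp: \<rho>_def)
    then have "7 / 2 < sqrt (real r)"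
      using 3 \<open>1 \<le> r\<close> by (simp add: \<rho>_def divide_less_eq mult.commute)
    then have "(7 / 2) ^ 2 < (sqrt (real r)) ^ 2"
      by (intro power_strict_mono) auto
    then have "2 \<le> real r"
      by (simp add: power2_eq_square)
    have "0 < \<rho>"
      using \<open>0 < D\<close> \<open>1 \<le> r\<close> by (simp add: \<rho>_def)
    have "real r * \<rho>\<^sup>2 = (49 / 4) * D\<^sup>2"
      using \<open>1 \<le> r\<close> by (simp add: \<rho>_def power_divide power_mult_distrib)
    then have "2 * D\<^sup>2 \<le> real r * \<rho>\<^sup>2"
      using zero_le_power2[of D] by linarith
    then obtain F where "finite F"
      and card_F: "real (card F) * (\<epsilon> * real (card P)) ^ r \<le> 2 * real (card P) ^ r"
      and hits: "\<And>Y. Y \<subseteq> P \<Longrightarrow> \<epsilon> * real (card P) \<le> real (card Y) \<Longrightarrow>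
        (\<Union>f\<in>F. cball f \<rho>) \<inter> convex hull Y \<noteq> {}"
      using centroid_net[OF \<open>finite P\<close> diam \<open>1 \<le> r\<close> \<open>0 < \<rho>\<close> _ \<open>0 < \<epsilon> * real (card P)\<close>]
      by blast
    have "real (card F) * \<epsilon> ^ r \<le> 2"
      using card_F \<open>0 < real (card P)\<close> by (simp add: power_mult_distrib)
    also have "\<dots> \<le> real r ^ r"
      using \<open>2 \<le> real r\<close> \<open>real r \<le> real r ^ r\<close> by linarith
    finally have "real (card F) \<le> real r ^ r / \<epsilon> ^ r"
      using \<open>0 < \<epsilon>\<close> by (simp add: le_divide_eq)
    then show thesis
      using that[of F] \<open>finite F\<close> hits by (simp add: \<rho>_def)
  qed
qed

lemma union_cball_eq_minkowski_sum:
  fixes F :: "'a::real_normed_vector set"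
  assumes "0 \<le> \<rho>"
  shows "(\<Union>f\<in>F. cball f \<rho>) = {f + v | f v. f \<in> F \<and> v \<in> (\<lambda>b. \<rho> *\<^sub>R b) ` cball 0 1}"
proof -
  have scaled_ball: "(\<lambda>b. \<rho> *\<^sub>R b) ` cball 0 1 = cball (0::'a) \<rho>"
  proof (cases "\<rho> = 0")
    case True
    then show ?thesis
      by (auto intro!: image_eqI[of _ _ 0])
  next
    case False
    then show ?thesis
      using cball_scale[of \<rho> 0 1] assms by simp
  qed
  show ?thesis
  proof (intro set_eqI iffI)
    fix x
    assume "x \<in> (\<Union>f\<in>F. cball f \<rho>)"
    then obtain f where "f \<in> F" and "x - f \<in> cball 0 \<rho>"
      by (auto simp: dist_norm norm_minus_commute)
    then show "x \<in> {f + v | f v. f \<in> F \<and> v \<in> (\<lambda>b. \<rho> *\<^sub>R b) ` cball 0 1}"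
      unfolding scaled_ball by force
  next
    fix x
    assume "x \<in> {f + v | f v. f \<in> F \<and> v \<in> (\<lambda>b. \<rho> *\<^sub>R b) ` cball 0 1}"
    then obtain f v where "f \<in> F" and "v \<in> cball 0 \<rho>" and "x = f + v"
      unfolding scaled_ball by blast
    then show "x \<in> (\<Union>f\<in>F. cball f \<rho>)"
      by (auto simp: dist_norm intro!: bexI[of _ f])
  qed
qed

theorem theorem7p3:
  fixes P :: "'a::euclidean_space set" and n r :: nat and \<epsilon> D :: real
  assumes "finite P" and "card P = n"
    and "D = diameter P"
    and "1 \<le> r" and "r \<le> n"
    and "\<epsilon> > 0"
  shows "\<exists>F :: 'a set. finite F \<and> real (card F) \<le> real r ^ r * \<epsilon> powr (- real r) \<and>
           (\<forall>Y. Y \<subseteq> P \<and> real (card Y) \<ge> \<epsilon> * real n \<longrightarrow>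
              {f + v | f v. f \<in> F \<and> v \<in> (\<lambda>b. (3.5 * D / sqrt (real r)) *\<^sub>R b) ` cball 0 1}
                \<inter> convex hull Y \<noteq> {})"
proof -
  have "P \<noteq> {}"
    using assms(2,4,5) by auto
  have diam: "\<And>x y. x \<in> P \<Longrightarrow> y \<in> P \<Longrightarrow> dist x y \<le> D"
    using assms(1,3) by (simp add: diameter_bounded_bound finite_imp_bounded)
  obtain F where "finite F" and "real (card F) \<le> real r ^ r / \<epsilon> ^ r"
    and "\<And>Y. Y \<subseteq> P \<Longrightarrow> \<epsilon> * real (card P) \<le> real (card Y) \<Longrightarrow>
      (\<Union>f\<in>F. cball f (3.5 * D / sqrt (real r))) \<inter> convex hull Y \<noteq> {}"
    using heavy_hull_net[OF assms(1) \<open>P \<noteq> {}\<close> diam assms(4,6)] by blast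
  moreover have "0 \<le> 3.5 * D / sqrt (real r)"
    using assms(1,3) by (simp add: diameter_ge_0 finite_imp_bounded)
  moreover have "\<epsilon> powr (- real r) = 1 / \<epsilon> ^ r"
    using assms(6) by (simp add: powr_minus powr_realpow divide_inverse)
  ultimately show ?thesis
    using assms(2) union_cball_eq_minkowski_sum[of "3.5 * D / sqrt (real r)" F]
    by (intro exI[of _ F]) auto
qed

end
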